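(* Let $(P)$ be a property of C*-algebras. Assume: (1) the zero C*-algebra has $(P)$; (2) whenever $A$ is a C*-algebra and $I, J \subseteq A$ are ideals with $(P)$, then $I + J$ has $(P)$; (3) whenever $A$ is a C*-algebra, $\Lambda$ is a directed set, and $(I_\lambda)_{\lambda \in \Lambda}$ is a family of ideals of $A$ with $(P)$ such that $I_\lambda \subseteq I_\mu$ whenever $\lambda \le \mu$, then $\overline{\bigcup_{\lambda \in \Lambda} I_\lambda}$ has $(P)$. Then $(P)$ admits largest ideals.
   Context: All ideals are closed two-sided. $(P)$ admits largest ideals if for every C*-algebra $A$ there is an ideal $I \subseteq A$ with $(P)$ such that every ideal $J \subseteq A$ with $(P)$ satisfies $J \subseteq I$. *)

theory Defs
  imports "HOL-Analysis.Analysis"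
begin

class cstar_algebra = real_normed_algebra + banach +
  fixes scaleC :: "complex \<Rightarrow> 'a \<Rightarrow> 'a"
    and cstar :: "'a \<Rightarrow> 'a"
  assumes scaleC_add_right: "scaleC c (x + y) = scaleC c x + scaleC c y"
    and scaleC_add_left: "scaleC (b + c) x = scaleC b x + scaleC c x"
    and scaleC_scaleC: "scaleC b (scaleC c x) = scaleC (b * c) x"
    and scaleC_one: "scaleC 1 x = x"
    and scaleR_scaleC: "scaleR r x = scaleC (complex_of_real r) x"
    and norm_scaleC: "norm (scaleC c x) = cmod c * norm x"
    and mult_scaleC_left: "scaleC c x * y = scaleC c (x * y)"
    and mult_scaleC_right: "x * scaleC c y = scaleC c (x * y)"
    and cstar_cstar: "cstar (cstar x) = x"
    and cstar_add: "cstar (x + y) = cstar x + cstar y"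
    and cstar_scaleC: "cstar (scaleC c x) = scaleC (cnj c) (cstar x)"
    and cstar_mult: "cstar (x * y) = cstar y * cstar x"
    and cstar_identity: "norm (cstar x * x) = norm x ^ 2"

definition cstar_ideal :: "'a::cstar_algebra set \<Rightarrow> bool" where
  "cstar_ideal I \<longleftrightarrow> closed I \<and> 0 \<in> I
     \<and> (\<forall>x\<in>I. \<forall>y\<in>I. x + y \<in> I)
     \<and> (\<forall>c. \<forall>x\<in>I. scaleC c x \<in> I)
     \<and> (\<forall>a. \<forall>x\<in>I. a * x \<in> I \<and> x * a \<in> I)"

definition directed_set :: "'i set \<Rightarrow> ('i \<Rightarrow> 'i \<Rightarrow> bool) \<Rightarrow> bool" where
  "directed_set L le \<longleftrightarrow> L \<noteq> {}
     \<and> (\<forall>x\<in>L. le x x)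
     \<and> (\<forall>x\<in>L. \<forall>y\<in>L. \<forall>z\<in>L. le x y \<longrightarrow> le y z \<longrightarrow> le x z)
     \<and> (\<forall>x\<in>L. \<forall>y\<in>L. \<exists>z\<in>L. le x z \<and> le y z)"

end

theory Submission
  imports Defs
begin

(* The closure of the union of all ideals with (P) is the largest one: by (2) these ideals
   form a family directed by inclusion, so (3) applies. For (2) to be applicable, the sum
   of two closed ideals I, J must be closed. This follows from dist(x, I \<inter> J) = dist(x, J)
   for x \<in> I, which in turn comes from approximate units: for j \<in> J there is u \<in> J with
   |z - z u| \<le> |z| for all z and |j - j u| small.
   Instead of functional calculus, 1 - u is built in the unitization as the Cesaro mean
   (1/N) (U^0 + ... + U^(N-1)) of the powers of the Cayley transform U = (1 + t) (1 - t)^-1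
   of the skew-adjoint element t = i j* j / (|j|^2 + 1). Right multiplication by the powers
   of U is isometric, while t times the sum of the powers stays bounded independently of N;
   hence |j (U^0 + ... + U^(N-1))| is of order sqrt N. *)

context cstar_algebra
begin

lemma scaleC_zero_right [simp]: "scaleC c 0 = 0"
  using scaleC_add_right[of c 0 0] by simp

lemma scaleC_zero_left [simp]: "scaleC 0 x = 0"
  using scaleC_add_left[of 0 0 x] by simp

lemma scaleC_minus_left [simp]: "scaleC (- c) x = - scaleC c x"
  using scaleC_add_left[of "- c" c x] by (simp add: eq_neg_iff_add_eq_0)

lemma cstar_zero [simp]: "cstar 0 = 0"
  using cstar_add[of 0 0] by simp

lemma cstar_minus [simp]: "cstar (- x) = - cstar x"
  using cstar_add[of "- x" x] by (simp add: eq_neg_iff_add_eq_0)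

lemma cstar_diff: "cstar (x - y) = cstar x - cstar y"
  using cstar_add[of x "- y"] by simp

lemma norm_cstar [simp]: "norm (cstar x) = norm x"
proof -
  have le: "norm y \<le> norm (cstar y)" for y
  proof (cases "y = 0")
    case False
    have "norm y ^ 2 = norm (cstar y * y)" by (simp add: cstar_identity)
    also have "\<dots> \<le> norm (cstar y) * norm y" by (rule norm_mult_ineq)
    finally show ?thesis using False by (simp add: power2_eq_square)
  qed simp
  show ?thesis using le[of x] le[of "cstar x"] by (simp add: cstar_cstar)
qed

lemma cstar_identity': "norm (x * cstar x) = norm x ^ 2"
  using cstar_identity[of "cstar x"] by (simp add: cstar_cstar)

end

lemma bounded_linear_scaleC: "bounded_linear (scaleC c :: 'a :: cstar_algebra \<Rightarrow> 'a)"
proof (rule bounded_linear_intro[where K = "cmod c"])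
  show "scaleC c (x + y) = scaleC c x + scaleC c y" for x y by (rule scaleC_add_right)
  show "scaleC c (scaleR r x) = scaleR r (scaleC c x)" for r x
    by (simp add: scaleR_scaleC scaleC_scaleC mult.commute)
  show "norm (scaleC c x) \<le> norm x * cmod c" for x by (simp add: norm_scaleC mult.commute)
qed

subsection \<open>Closed ideals\<close>

lemma cstar_ideal_zero: "cstar_ideal I \<Longrightarrow> 0 \<in> I"
  by (simp add: cstar_ideal_def)

lemma cstar_ideal_closed: "cstar_ideal I \<Longrightarrow> closed I"
  by (simp add: cstar_ideal_def)

lemma cstar_ideal_add: "cstar_ideal I \<Longrightarrow> x \<in> I \<Longrightarrow> y \<in> I \<Longrightarrow> x + y \<in> I"
  by (simp add: cstar_ideal_def)

lemma cstar_ideal_scaleC: "cstar_ideal I \<Longrightarrow> x \<in> I \<Longrightarrow> scaleC c x \<in> I"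
  by (simp add: cstar_ideal_def)

lemma cstar_ideal_mult_left: "cstar_ideal I \<Longrightarrow> x \<in> I \<Longrightarrow> a * x \<in> I"
  by (simp add: cstar_ideal_def)

lemma cstar_ideal_mult_right: "cstar_ideal I \<Longrightarrow> x \<in> I \<Longrightarrow> x * a \<in> I"
  by (simp add: cstar_ideal_def)

lemma cstar_ideal_minus: "cstar_ideal I \<Longrightarrow> x \<in> I \<Longrightarrow> - x \<in> I"
  using cstar_ideal_scaleC[of I x "- 1"] by (simp add: scaleC_one)

lemma cstar_ideal_diff: "cstar_ideal I \<Longrightarrow> x \<in> I \<Longrightarrow> y \<in> I \<Longrightarrow> x - y \<in> I"
  using cstar_ideal_add[of I x "- y"] cstar_ideal_minus[of I y] by simp

lemma cstar_ideal_sum: "cstar_ideal I \<Longrightarrow> (\<And>i. i \<in> S \<Longrightarrow> f i \<in> I) \<Longrightarrow> sum f S \<in> I"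
  by (induction S rule: infinite_finite_induct) (auto intro: cstar_ideal_zero cstar_ideal_add)

lemma cstar_ideal_singleton_zero: "cstar_ideal {0 :: 'a :: cstar_algebra}"
  by (simp add: cstar_ideal_def)

lemma cstar_ideal_closure:
  fixes U :: "'a :: cstar_algebra set"
  assumes zero: "0 \<in> U"
    and add: "\<And>x y. x \<in> U \<Longrightarrow> y \<in> U \<Longrightarrow> x + y \<in> U"
    and scale: "\<And>c x. x \<in> U \<Longrightarrow> scaleC c x \<in> U"
    and mult: "\<And>a x. x \<in> U \<Longrightarrow> a * x \<in> U \<and> x * a \<in> U"
  shows "cstar_ideal (closure U)"
proof -
  have invariant: "f x \<in> closure U"
    if cont: "continuous_on UNIV f" and U: "\<And>x. x \<in> U \<Longrightarrow> f x \<in> closure U"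
      and x: "x \<in> closure U" for f :: "'a \<Rightarrow> 'a" and x
  proof -
    have "f ` closure U \<subseteq> closure U"
      using continuous_on_subset[OF cont subset_UNIV] U by (intro image_closure_subset) auto
    thus ?thesis using x by blast
  qed
  have U_closure: "x \<in> U \<Longrightarrow> x \<in> closure U" for x
    using closure_subset by blast
  have add_closure: "x + y \<in> closure U" if x: "x \<in> closure U" and y: "y \<in> closure U" for x y
  proof -
    have "x + y' \<in> closure U" if "y' \<in> U" for y'
      using invariant[where f = "\<lambda>x. x + y'", OF _ _ x] add U_closure that
      by (simp add: continuous_on_add continuous_on_id continuous_on_const)
    thus ?thesis
      using invariant[where f = "\<lambda>y. x + y", OF _ _ y]
      by (simp add: continuous_on_add continuous_on_id continuous_on_const)
  qed
  have "scaleC c x \<in> closure U" if "x \<in> closure U" for c x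
    using invariant[where f = "scaleC c", OF _ _ that] scale U_closure
      linear_continuous_on[OF bounded_linear_scaleC] by blast
  moreover have "a * x \<in> closure U" if "x \<in> closure U" for a x
    using invariant[where f = "\<lambda>x. a * x", OF _ _ that] mult U_closure
      continuous_on_mult_left[OF continuous_on_id] by blast
  moreover have "x * a \<in> closure U" if "x \<in> closure U" for a x
    using invariant[where f = "\<lambda>x. x * a", OF _ _ that] mult U_closure
      continuous_on_mult_right[OF continuous_on_id] by blast
  ultimately show ?thesis
    using zero U_closure add_closure unfolding cstar_ideal_def by simp
qed

lemma cstar_ideal_closure_Union:
  fixes C :: "'a :: cstar_algebra set set"
  assumes "C \<noteq> {}" and ideals: "\<And>K. K \<in> C \<Longrightarrow> cstar_ideal K"
    and directed: "\<And>I J. I \<in> C \<Longrightarrow> J \<in> C \<Longrightarrow> \<exists>K\<in>C. I \<subseteq> K \<and> J \<subseteq> K"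
  shows "cstar_ideal (closure (\<Union>C))"
proof (rule cstar_ideal_closure)
  show "0 \<in> \<Union>C" using \<open>C \<noteq> {}\<close> ideals cstar_ideal_zero by blast
  show "x + y \<in> \<Union>C" if xy: "x \<in> \<Union>C" "y \<in> \<Union>C" for x y
  proof -
    obtain I J where "I \<in> C" "J \<in> C" "x \<in> I" "y \<in> J" using xy by blast
    then obtain K where "K \<in> C" "x \<in> K" "y \<in> K" using directed by blast
    thus ?thesis using ideals cstar_ideal_add by blast
  qed
  show "scaleC c x \<in> \<Union>C" if "x \<in> \<Union>C" for c x
    using that ideals cstar_ideal_scaleC by blast
  show "a * x \<in> \<Union>C \<and> x * a \<in> \<Union>C" if "x \<in> \<Union>C" for a x
    using that ideals cstar_ideal_mult_left cstar_ideal_mult_right by blast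
qed

subsection \<open>The unitization\<close>

datatype 'a unitization = Unitization (scalar_part: complex) (algebra_part: 'a)

instantiation unitization :: (cstar_algebra) ring_1
begin

definition "0 = Unitization 0 0"
definition "1 = Unitization 1 0"
definition "X + Y = Unitization (scalar_part X + scalar_part Y) (algebra_part X + algebra_part Y)"
definition "X - Y = Unitization (scalar_part X - scalar_part Y) (algebra_part X - algebra_part Y)"
definition "- X = Unitization (- scalar_part X) (- algebra_part X)"
definition "X * Y = Unitization (scalar_part X * scalar_part Y)
  (scaleC (scalar_part X) (algebra_part Y) + scaleC (scalar_part Y) (algebra_part X)
    + algebra_part X * algebra_part Y)"

instance
proof
  fix X Y Z :: "'a unitization"
  note defs = zero_unitization_def one_unitization_def plus_unitization_def
    minus_unitization_def uminus_unitization_def times_unitization_def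
  show "X * Y * Z = X * (Y * Z)"
    by (simp add: defs algebra_simps scaleC_add_right scaleC_scaleC mult_scaleC_left
        mult_scaleC_right mult.commute)
  show "(X + Y) * Z = X * Z + Y * Z" "X * (Y + Z) = X * Y + X * Z"
    by (simp_all add: defs algebra_simps scaleC_add_right scaleC_add_left)
  show "X + Y + Z = X + (Y + Z)" "X + Y = Y + X" "0 + X = X" "- X + X = 0" "X - Y = X + - Y"
    by (simp_all add: defs algebra_simps)
  show "1 * X = X" "X * 1 = X" "(0 :: 'a unitization) \<noteq> 1"
    by (simp_all add: defs scaleC_one)
qed

end

lemma unitization_parts [simp]:
  fixes X Y :: "'a :: cstar_algebra unitization"
  shows "scalar_part (X + Y) = scalar_part X + scalar_part Y"
    "algebra_part (X + Y) = algebra_part X + algebra_part Y"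
    "scalar_part (X - Y) = scalar_part X - scalar_part Y"
    "algebra_part (X - Y) = algebra_part X - algebra_part Y"
    "scalar_part (- X) = - scalar_part X" "algebra_part (- X) = - algebra_part X"
    "scalar_part (X * Y) = scalar_part X * scalar_part Y"
    "algebra_part (X * Y) = scaleC (scalar_part X) (algebra_part Y)
       + scaleC (scalar_part Y) (algebra_part X) + algebra_part X * algebra_part Y"
    "scalar_part (0 :: 'a unitization) = 0" "algebra_part (0 :: 'a unitization) = 0"
    "scalar_part (1 :: 'a unitization) = 1" "algebra_part (1 :: 'a unitization) = 0"
  by (simp_all add: zero_unitization_def one_unitization_def plus_unitization_def
      minus_unitization_def uminus_unitization_def times_unitization_def)

lemma scalar_part_sum: "scalar_part (sum f S) = (\<Sum>i\<in>S. scalar_part (f i :: 'a :: cstar_algebra unitization))"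
  by (induction S rule: infinite_finite_induct) auto

lemma algebra_part_sum: "algebra_part (sum f S) = (\<Sum>i\<in>S. algebra_part (f i :: 'a :: cstar_algebra unitization))"
  by (induction S rule: infinite_finite_induct) auto

lemma scalar_part_power: "scalar_part (X ^ n) = scalar_part (X :: 'a :: cstar_algebra unitization) ^ n"
  by (induction n) auto

lemma algebra_part_power_in_ideal:
  assumes "cstar_ideal J" "algebra_part X \<in> J"
  shows "algebra_part (X ^ n :: 'a :: cstar_algebra unitization) \<in> J"
  by (induction n) (use assms in \<open>auto intro: cstar_ideal_zero cstar_ideal_add cstar_ideal_scaleC cstar_ideal_mult_left\<close>)

definition ustar :: "'a :: cstar_algebra unitization \<Rightarrow> 'a unitization" where
  "ustar X = Unitization (cnj (scalar_part X)) (cstar (algebra_part X))"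

lemma ustar_parts [simp]:
  "scalar_part (ustar X) = cnj (scalar_part X)" "algebra_part (ustar X) = cstar (algebra_part X)"
  by (simp_all add: ustar_def)

lemma ustar_mult: "ustar (X * Y) = ustar Y * ustar X"
  by (rule unitization.expand) (simp add: cstar_add cstar_scaleC cstar_mult algebra_simps)

lemma ustar_add: "ustar (X + Y) = ustar X + ustar Y"
  by (rule unitization.expand) (simp add: cstar_add)

lemma ustar_diff: "ustar (X - Y) = ustar X - ustar Y"
  by (rule unitization.expand) (simp add: cstar_diff)

lemma ustar_one [simp]: "ustar 1 = 1"
  by (rule unitization.expand) simp

lemma ustar_embed: "ustar (Unitization 0 z) = Unitization 0 (cstar z)"
  by (simp add: ustar_def)

definition ract :: "'a :: cstar_algebra \<Rightarrow> 'a unitization \<Rightarrow> 'a" where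
  "ract z X = scaleC (scalar_part X) z + z * algebra_part X"

lemma embed_mult: "Unitization 0 z * X = Unitization 0 (ract z X)"
  by (rule unitization.expand) (simp add: ract_def times_unitization_def)

lemma ract_embed [simp]: "ract z (Unitization 0 w) = z * w"
  by (simp add: ract_def)

lemma embed_mult_embed [simp]: "Unitization 0 z * Unitization 0 w = Unitization 0 (z * w)"
  by (simp add: embed_mult)

lemma ract_add_left: "ract (z + w) X = ract z X + ract w X"
  by (simp add: ract_def scaleC_add_right algebra_simps)

lemma ract_scaleC_left: "ract (scaleC c z) X = scaleC c (ract z X)"
  by (simp add: ract_def scaleC_add_right scaleC_scaleC mult_scaleC_left mult.commute)

lemma ract_sum_right: "ract z (sum f S) = (\<Sum>i\<in>S. ract z (f i))"
  by (induction S rule: infinite_finite_induct)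
     (auto simp: ract_def scalar_part_sum algebra_part_sum scaleC_add_left algebra_simps)

lemma norm_ract_coisometry:
  assumes "X * ustar X = 1"
  shows "norm (ract z X) = norm z"
proof -
  have "Unitization 0 (ract z X * cstar (ract z X))
      = Unitization 0 (ract z X) * ustar (Unitization 0 (ract z X))"
    by (simp add: ustar_embed)
  also have "\<dots> = Unitization 0 z * (X * ustar X) * ustar (Unitization 0 z)"
    by (simp add: embed_mult[symmetric] ustar_mult mult.assoc)
  also have "\<dots> = Unitization 0 (z * cstar z)" using assms by (simp add: ustar_embed)
  finally have "ract z X * cstar (ract z X) = z * cstar z" by simp
  hence "norm (ract z X) ^ 2 = norm z ^ 2" by (metis cstar_identity')
  thus ?thesis by (simp add: power2_eq_iff_nonneg)
qed

lemma coisometry_power: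
  assumes "X * ustar X = 1"
  shows "X ^ n * ustar (X ^ n) = 1"
proof (induction n)
  case (Suc n)
  have "X ^ Suc n * ustar (X ^ Suc n) = X * (X ^ n * ustar (X ^ n)) * ustar X"
    by (simp only: power_Suc ustar_mult mult.assoc)
  then show ?case using Suc assms by simp
qed simp

lemma norm_ract_sum_coisometry_powers:
  assumes "X * ustar X = 1"
  shows "norm (ract z (\<Sum>k<N. X ^ k)) \<le> real N * norm z"
proof -
  have "norm (ract z (\<Sum>k<N. X ^ k)) \<le> (\<Sum>k<N. norm (ract z (X ^ k)))"
    unfolding ract_sum_right by (rule norm_sum)
  also have "\<dots> = real N * norm z"
    by (simp add: norm_ract_coisometry[OF coisometry_power[OF assms]])
  finally show ?thesis .
qed

lemma norm_algebra_part_coisometry: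
  assumes "X * ustar X = 1" and "scalar_part X = 1"
  shows "norm (algebra_part X) \<le> 2"
proof -
  define b where "b = algebra_part X"
  have "norm b ^ 2 = norm (ract (cstar b) X - cstar b)"
    using assms(2) by (simp add: b_def ract_def scaleC_one cstar_identity)
  also have "\<dots> \<le> norm (ract (cstar b) X) + norm (cstar b)" by (rule norm_triangle_ineq4)
  also have "\<dots> = 2 * norm b" by (simp add: norm_ract_coisometry[OF assms(1)])
  finally have "norm b ^ 2 \<le> 2 * norm b" .
  thus ?thesis by (cases "norm b = 0") (auto simp: b_def power2_eq_square)
qed

subsection \<open>Approximate units from Cayley transforms\<close>

lemma quasi_inverse_in_ideal:
  assumes J: "cstar_ideal J" and t: "t \<in> J" and small: "norm t < 1"
  shows "\<exists>r\<in>J. t + t * r = r"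
proof -
  have "\<exists>!r\<in>J. t + t * r = r"
  proof (rule Banach_fix[where c = "norm t"])
    show "complete J" using cstar_ideal_closed[OF J] by (simp add: complete_eq_closed)
    show "J \<noteq> {}" using cstar_ideal_zero[OF J] by blast
    show "(\<lambda>r. t + t * r) ` J \<subseteq> J" using J t by (auto intro: cstar_ideal_add cstar_ideal_mult_left)
    show "dist (t + t * a) (t + t * b) \<le> norm t * dist a b" for a b
      using norm_mult_ineq[of t "a - b"] by (simp add: dist_norm algebra_simps)
  qed (use small in auto)
  thus ?thesis by blast
qed

lemma cayley_coisometry:
  fixes T R :: "'a :: cstar_algebra unitization"
  assumes skew: "ustar T = - T" and left: "(1 - T) * R = 1" and right: "R * (1 - T) = 1"
  shows "(R + R - 1) * ustar (R + R - 1) = 1"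
proof -
  define S where "S = ustar R"
  have S_left: "S * (1 + T) = 1"
    using arg_cong[OF left, of ustar] by (simp add: S_def ustar_mult ustar_diff skew)
  have S_right: "(1 + T) * S = 1"
    using arg_cong[OF right, of ustar] by (simp add: S_def ustar_mult ustar_diff skew)
  define M where "M = (1 + T) * (1 - T)"
  have M_commute: "M = (1 - T) * (1 + T)" by (simp add: M_def algebra_simps)
  have RSM: "R * S * M = 1"
    using right unfolding M_def by (simp add: mult.assoc flip: mult.assoc[of S] add: S_left)
  have MSR: "M * (S * R) = 1"
    using left unfolding M_commute by (simp add: mult.assoc flip: mult.assoc[of "1 + T"] add: S_right)
  have RS_commute: "R * S = S * R"
  proof -
    have "R * S = (R * S * M) * (S * R)" by (simp add: mult.assoc MSR)
    thus ?thesis by (simp add: RSM)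
  qed
  have U: "R + R - 1 = (1 + T) * R" using left by (simp add: algebra_simps)
  have "(R + R - 1) * ustar (R + R - 1) = (1 + T) * (R * S) * (1 - T)"
    by (simp add: U ustar_mult ustar_add skew S_def mult.assoc)
  also have "\<dots> = ((1 + T) * S) * (R * (1 - T))" by (simp add: RS_commute mult.assoc)
  finally show ?thesis by (simp add: S_right right)
qed

lemma cayley_transform:
  fixes t :: "'a :: cstar_algebra"
  assumes J: "cstar_ideal J" and t: "t \<in> J" and skew: "cstar t = - t" and small: "norm t < 1"
  obtains r where "r \<in> J" "t + t * r = r"
    "(1 + Unitization 0 (r + r)) * ustar (1 + Unitization 0 (r + r)) = 1"
proof -
  obtain r where r: "r \<in> J" "t + t * r = r" using quasi_inverse_in_ideal[OF J t small] by blast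
  \<comment> \<open>1 + r is a right inverse of 1 - t; the involution turns the corresponding solution
    for -t into a left inverse.\<close>
  obtain r' where "- t + - t * r' = r'"
    using quasi_inverse_in_ideal[OF J cstar_ideal_minus[OF J t]] small by auto
  from arg_cong[OF this, of cstar] have r': "t + cstar r' * t = cstar r'"
    by (simp add: cstar_diff cstar_mult skew)
  define T where "T = Unitization 0 t"
  define R where "R = 1 + Unitization 0 r"
  have left: "(1 - T) * R = 1"
    by (rule unitization.expand) (simp add: T_def R_def scaleC_one, metis r(2) add_diff_cancel_left')
  have left_inverse: "(1 + Unitization 0 (cstar r')) * (1 - T) = 1"
    by (rule unitization.expand) (simp add: T_def scaleC_one, metis r' add_diff_cancel_left')
  have "1 + Unitization 0 (cstar r') = R"
    using arg_cong[OF left, of "\<lambda>X. (1 + Unitization 0 (cstar r')) * X"]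
    by (simp flip: mult.assoc add: left_inverse)
  hence "R * (1 - T) = 1" using left_inverse by simp
  moreover have "ustar T = - T" by (rule unitization.expand) (simp add: T_def skew)
  ultimately have "(R + R - 1) * ustar (R + R - 1) = 1" using left by (intro cayley_coisometry)
  moreover have "R + R - 1 = 1 + Unitization 0 (r + r)" by (rule unitization.expand) (simp add: R_def)
  ultimately show thesis using that r by simp
qed

lemma norm_ract_cayley_average:
  fixes t r :: "'a :: cstar_algebra"
  assumes r: "t + t * r = r" and U: "U = 1 + Unitization 0 (r + r)" and coisometry: "U * ustar U = 1"
  shows "norm (ract t (\<Sum>k<N. U ^ k)) \<le> 1 + norm t"
proof -
  \<comment> \<open>(U - 1) W telescopes to U^N - 1, which is bounded; U - 1 = 2 r and t = (1 - t) r.\<close>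
  define W where "W = (\<Sum>k<N. U ^ k)"
  have telescope: "(U - 1) * W = U ^ N - 1"
  proof -
    have "(U - 1) * W = (\<Sum>k<N. U ^ Suc k - U ^ k)"
      unfolding W_def sum_distrib_left by (rule sum.cong) (simp_all add: algebra_simps)
    also have "\<dots> = U ^ N - 1" by (simp only: sum_lessThan_telescope power_0)
    finally show ?thesis .
  qed
  define b where "b = algebra_part (U ^ N)"
  have "scalar_part (U ^ N) = 1" by (simp add: scalar_part_power U)
  hence UN: "U ^ N - 1 = Unitization 0 b" by (intro unitization.expand) (simp add: b_def)
  have "norm b \<le> 2"
    unfolding b_def using coisometry_power[OF coisometry] \<open>scalar_part (U ^ N) = 1\<close>
    by (rule norm_algebra_part_coisometry)
  define q where "q = ract r W"
  have "Unitization 0 (q + q) = (U - 1) * W"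
    by (simp add: q_def U embed_mult ract_add_left)
  hence "q + q = b" by (simp add: telescope UN)
  hence "2 * norm q = norm b" by (metis norm_scaleR abs_numeral scaleR_2)
  hence q_bound: "norm q \<le> 1" using \<open>norm b \<le> 2\<close> by simp
  have "Unitization 0 t = (1 - Unitization 0 t) * Unitization 0 r"
    using r by (intro unitization.expand) (simp add: scaleC_one eq_diff_eq)
  hence "Unitization 0 (ract t W) = (1 - Unitization 0 t) * Unitization 0 q"
    by (metis embed_mult mult.assoc q_def)
  from arg_cong[OF this, of algebra_part] have "ract t W = q - t * q" by (simp add: scaleC_one)
  hence "norm (ract t W) \<le> norm q + norm t * norm q"
    by (metis norm_mult_ineq norm_triangle_ineq4 add_left_mono order_trans)
  also have "\<dots> \<le> 1 + norm t" using q_bound by (simp add: add_mono mult_left_le)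
  finally show ?thesis by (simp add: W_def)
qed

lemma norm_ract_square_le:
  assumes bound: "\<And>z. norm (ract z W) \<le> M * norm z"
  shows "norm (ract j W) ^ 2 \<le> M * norm (ract (cstar j * j) W)"
proof -
  define v where "v = ract j W"
  define y where "y = ract (cstar j * j) W"
  have "Unitization 0 (cstar v * v) = ustar (Unitization 0 j * W) * (Unitization 0 j * W)"
    by (simp add: v_def embed_mult[of j W] ustar_embed)
  also have "\<dots> = ustar W * (Unitization 0 (cstar j) * Unitization 0 j) * W"
    by (simp only: ustar_mult ustar_embed mult.assoc)
  also have "\<dots> = ustar W * Unitization 0 y"
    by (simp add: y_def embed_mult mult.assoc)
  also have "\<dots> = ustar (Unitization 0 (cstar y) * W)"
    by (simp add: ustar_mult ustar_embed cstar_cstar)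
  finally have "cstar v * v = cstar (ract (cstar y) W)" by (simp add: embed_mult ustar_embed)
  hence "norm v ^ 2 = norm (ract (cstar y) W)" by (metis cstar_identity norm_cstar)
  also have "\<dots> \<le> M * norm y" using bound[of "cstar y"] by simp
  finally show ?thesis by (simp add: v_def y_def)
qed

lemma approximate_right_unit_of_average:
  assumes J: "cstar_ideal J" and W: "algebra_part W \<in> J" "scalar_part W = of_nat N" "N > 0"
    and contraction: "\<And>z. norm (ract z W) \<le> real N * norm z"
    and small: "norm (ract j W) \<le> real N * e"
  shows "\<exists>u\<in>J. (\<forall>z. norm (z - z * u) \<le> norm z) \<and> norm (j - j * u) \<le> e"
proof
  define u where "u = - scaleC (1 / of_nat N) (algebra_part W)"
  show "u \<in> J" unfolding u_def using J W by (intro cstar_ideal_minus cstar_ideal_scaleC)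
  have "z - z * u = scaleC (1 / of_nat N) (ract z W)" for z
    using W by (simp add: u_def ract_def scaleC_add_right scaleC_scaleC scaleC_one mult_scaleC_right)
  hence mean: "norm (z - z * u) = norm (ract z W) / real N" for z
    by (simp add: norm_scaleC norm_divide)
  show "(\<forall>z. norm (z - z * u) \<le> norm z) \<and> norm (j - j * u) \<le> e"
    using contraction small \<open>N > 0\<close> by (simp add: mean pos_divide_le_eq mult.commute)
qed

lemma approximate_right_unit:
  fixes j :: "'a :: cstar_algebra"
  assumes J: "cstar_ideal J" and j: "j \<in> J" and e: "e > 0"
  shows "\<exists>u\<in>J. (\<forall>z. norm (z - z * u) \<le> norm z) \<and> norm (j - j * u) \<le> e"
proof -
  define a where "a = norm j ^ 2 + 1"
  have a: "a > 0" by (simp add: a_def add_nonneg_pos)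
  define t where "t = scaleC (\<i> / complex_of_real a) (cstar j * j)"
  have t: "t \<in> J" unfolding t_def using J j by (intro cstar_ideal_scaleC cstar_ideal_mult_left)
  have skew: "cstar t = - t" by (simp add: t_def cstar_scaleC cstar_mult cstar_cstar)
  have norm_t: "a * norm t = norm j ^ 2"
    using a by (simp add: t_def norm_scaleC cstar_identity norm_divide)
  hence "a * norm t < a * 1" by (simp add: a_def)
  hence "norm t < 1" using a by (simp only: mult_less_cancel_left_pos)
  then obtain r where "r \<in> J" and r: "t + t * r = r"
    and coisometry: "(1 + Unitization 0 (r + r)) * ustar (1 + Unitization 0 (r + r)) = 1"
    using cayley_transform[OF J t skew] by blast
  define U where "U = 1 + Unitization 0 (r + r)"
  define K where "K = 2 * norm j ^ 2 + 1"
  obtain N :: nat where N: "N > 0" "K \<le> real N * e ^ 2"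
  proof
    show "nat \<lceil>K / e ^ 2\<rceil> + 1 > 0" by simp
    have "K / e ^ 2 \<le> real (nat \<lceil>K / e ^ 2\<rceil> + 1)" by linarith
    thus "K \<le> real (nat \<lceil>K / e ^ 2\<rceil> + 1) * e ^ 2" using e by (simp add: pos_divide_le_eq)
  qed
  define W where "W = (\<Sum>k<N. U ^ k)"
  have "algebra_part W \<in> J"
    unfolding W_def algebra_part_sum using J \<open>r \<in> J\<close>
    by (intro cstar_ideal_sum algebra_part_power_in_ideal) (auto simp: U_def intro: cstar_ideal_add)
  moreover have "scalar_part W = of_nat N" by (simp add: W_def scalar_part_sum scalar_part_power U_def)
  moreover have contraction: "norm (ract z W) \<le> real N * norm z" for z
    unfolding W_def using coisometry by (simp add: U_def norm_ract_sum_coisometry_powers)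
  moreover have "norm (ract j W) \<le> real N * e"
  proof (rule power2_le_imp_le)
    have "ract (cstar j * j) W = scaleC (- \<i> * complex_of_real a) (ract t W)"
      using a by (simp add: t_def ract_scaleC_left scaleC_scaleC scaleC_one)
    hence "norm (ract (cstar j * j) W) = a * norm (ract t W)" using a by (simp add: norm_scaleC norm_mult)
    also have "\<dots> \<le> a * (1 + norm t)"
      using norm_ract_cayley_average[OF r U_def] coisometry a by (simp add: U_def W_def)
    finally have "norm (ract (cstar j * j) W) \<le> K" using norm_t by (simp add: K_def a_def algebra_simps)
    hence "norm (ract j W) ^ 2 \<le> real N * K"
      using norm_ract_square_le[OF contraction, of j] by (meson mult_left_mono of_nat_0_le_iff order_trans)
    also have "\<dots> \<le> real N * (real N * e ^ 2)" using N by (intro mult_left_mono) auto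
    also have "\<dots> = (real N * e) ^ 2" by (simp add: power_mult_distrib power2_eq_square mult.assoc)
    finally show "norm (ract j W) ^ 2 \<le> (real N * e) ^ 2" .
  qed (use e in simp)
  ultimately show ?thesis using J N by (intro approximate_right_unit_of_average)
qed

subsection \<open>Sums of closed ideals\<close>

lemma ideal_inter_approximates:
  fixes x j :: "'a :: cstar_algebra"
  assumes I: "cstar_ideal I" and J: "cstar_ideal J" and x: "x \<in> I" and j: "j \<in> J" and e: "e > 0"
  shows "\<exists>k\<in>I \<inter> J. norm (x - k) \<le> norm (x - j) + e"
proof -
  obtain u where u: "u \<in> J" and contraction: "\<And>z. norm (z - z * u) \<le> norm z"
    and approx: "norm (j - j * u) \<le> e"
    using approximate_right_unit[OF J j e] by blast
  have "x - x * u = ((x - j) - (x - j) * u) + (j - j * u)" by (simp add: algebra_simps)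
  hence "norm (x - x * u) \<le> norm ((x - j) - (x - j) * u) + norm (j - j * u)"
    by (metis norm_triangle_ineq)
  also have "\<dots> \<le> norm (x - j) + e" using contraction approx by (rule add_mono)
  finally have "norm (x - x * u) \<le> norm (x - j) + e" .
  moreover have "x * u \<in> I \<inter> J"
    using cstar_ideal_mult_right[OF I x] cstar_ideal_mult_left[OF J u] by blast
  ultimately show ?thesis by blast
qed

lemma ideal_plus_lift:
  fixes I J :: "'a :: cstar_algebra set"
  assumes I: "cstar_ideal I" and J: "cstar_ideal J" and a: "a \<in> I" "y - a \<in> J"
    and y': "y' \<in> {x + y | x y. x \<in> I \<and> y \<in> J}" and e: "e > 0"
  shows "\<exists>a'\<in>I. y' - a' \<in> J \<and> norm (a' - a) \<le> norm (y' - y) + e"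
proof -
  obtain p q where p: "p \<in> I" and q: "q \<in> J" and y'_eq: "y' = p + q" using y' by blast
  obtain k where k: "k \<in> I" "k \<in> J"
    and close: "norm ((p - a) - k) \<le> norm ((p - a) - ((y - a) - q)) + e"
    using ideal_inter_approximates[OF I J cstar_ideal_diff[OF I p a(1)]
        cstar_ideal_diff[OF J a(2) q] e] by blast
  have "p - k \<in> I" using I p k by (simp add: cstar_ideal_diff)
  moreover have "y' - (p - k) \<in> J" using J q k by (simp add: y'_eq cstar_ideal_add)
  moreover have "norm ((p - k) - a) \<le> norm (y' - y) + e"
    using close by (simp add: y'_eq algebra_simps)
  ultimately show ?thesis by blast
qed

lemma convergent_geometric_steps:
  fixes g :: "nat \<Rightarrow> 'a :: banach"
  assumes steps: "\<And>n. norm (g (Suc n) - g n) \<le> C * q ^ n" and q: "0 \<le> q" "q < 1"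
  shows "convergent g"
proof -
  have "summable (\<lambda>n. C * q ^ n)" using q by (intro summable_mult summable_geometric) simp
  hence "summable (\<lambda>n. g (Suc n) - g n)" by (rule summable_comparison_test'[where N = 0]) (use steps in simp)
  hence "convergent (\<lambda>n. (\<Sum>m<n. g (Suc m) - g m) + g 0)"
    by (intro convergent_add convergent_const) (simp add: summable_iff_convergent)
  thus ?thesis by (simp add: sum_lessThan_telescope)
qed

lemma closure_geometric_sequence:
  fixes z :: "'a :: real_normed_vector"
  assumes "z \<in> closure S"
  obtains w where "\<And>n. w n \<in> S" "w \<longlonglongrightarrow> z" "\<And>n. norm (w (Suc n) - w n) \<le> 2 * (1/2::real) ^ n"
proof -
  have "\<forall>n. \<exists>y\<in>S. dist y z < (1/2::real) ^ n"
    using assms unfolding closure_approachable by simp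
  hence "\<forall>n. \<exists>y. y \<in> S \<and> dist y z < (1/2::real) ^ n" by blast
  then obtain w where w: "\<And>n. w n \<in> S" and w_close: "\<And>n. dist (w n) z < (1/2::real) ^ n"
    using choice[of "\<lambda>n y. y \<in> S \<and> dist y z < (1/2::real) ^ n"] by blast
  have "(\<lambda>n. dist (w n) z) \<longlonglongrightarrow> 0"
    by (rule Lim_null_comparison[OF _ LIMSEQ_power_zero[of "1/2::real"]])
      (use w_close in \<open>auto intro: always_eventually less_imp_le\<close>)
  hence "w \<longlonglongrightarrow> z" by (rule tendsto_dist_iff[THEN iffD2])
  moreover have "norm (w (Suc n) - w n) \<le> 2 * (1/2::real) ^ n" for n
  proof -
    have "norm (w (Suc n) - w n) \<le> dist (w (Suc n)) z + dist (w n) z"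
      by (metis dist_norm dist_triangle2)
    also have "\<dots> \<le> (1/2) ^ Suc n + (1/2) ^ n" using w_close[of n] w_close[of "Suc n"] by linarith
    also have "\<dots> \<le> 2 * (1/2::real) ^ n" by simp
    finally show ?thesis .
  qed
  ultimately show thesis using that w by blast
qed

lemma closed_ideal_plus:
  fixes I J :: "'a :: cstar_algebra set"
  assumes I: "cstar_ideal I" and J: "cstar_ideal J"
  shows "closed {x + y | x y. x \<in> I \<and> y \<in> J}"
proof -
  define S where "S = {x + y | x y. x \<in> I \<and> y \<in> J}"
  have "z \<in> S" if z: "z \<in> closure S" for z
  proof -
    obtain w where w: "\<And>n. w n \<in> S" and w_lim: "w \<longlonglongrightarrow> z"
      and w_steps: "\<And>n. norm (w (Suc n) - w n) \<le> 2 * (1/2::real) ^ n"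
      using closure_geometric_sequence[OF z] by blast
    have lift: "\<exists>a'. (a' \<in> I \<and> w (Suc n) - a' \<in> J) \<and> norm (a' - a) \<le> 3 * (1/2::real) ^ n"
      if a: "a \<in> I \<and> w n - a \<in> J" for a n
    proof -
      obtain a' where "a' \<in> I" "w (Suc n) - a' \<in> J"
        and "norm (a' - a) \<le> norm (w (Suc n) - w n) + (1/2) ^ n"
        using ideal_plus_lift[OF I J a[THEN conjunct1] a[THEN conjunct2]
            w[of "Suc n", unfolded S_def], of "(1/2) ^ n"] by auto
      thus ?thesis using w_steps[of n] by auto
    qed
    have "\<exists>a. a \<in> I \<and> w 0 - a \<in> J" using w[of 0] by (auto simp: S_def)
    then obtain g where g: "\<And>n. g n \<in> I \<and> w n - g n \<in> J"
      and g_steps: "\<And>n. norm (g (Suc n) - g n) \<le> 3 * (1/2::real) ^ n"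
      using dependent_nat_choice[where P = "\<lambda>n a. a \<in> I \<and> w n - a \<in> J"
          and Q = "\<lambda>n a a'. norm (a' - a) \<le> 3 * (1/2::real) ^ n", OF _ lift] by blast
    obtain a where g_lim: "g \<longlonglongrightarrow> a"
      using convergent_geometric_steps[OF g_steps] by (auto simp: convergent_def)
    have "a \<in> I" using closed_sequentially[OF cstar_ideal_closed[OF I] _ g_lim] g by blast
    moreover have "z - a \<in> J"
      using closed_sequentially[OF cstar_ideal_closed[OF J] _ tendsto_diff[OF w_lim g_lim]] g by blast
    ultimately show "z \<in> S" unfolding S_def by (intro CollectI exI[of _ a] exI[of _ "z - a"]) simp
  qed
  hence "closure S \<subseteq> S" by blast
  thus ?thesis by (simp add: S_def[symmetric] closure_subset_eq)
qed

lemma cstar_ideal_plus: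
  fixes I J :: "'a :: cstar_algebra set"
  assumes I: "cstar_ideal I" and J: "cstar_ideal J"
  shows "cstar_ideal {x + y | x y. x \<in> I \<and> y \<in> J}" (is "cstar_ideal ?S")
proof -
  have "closure ?S = ?S" using closed_ideal_plus[OF I J] by simp
  moreover have "cstar_ideal (closure ?S)"
  proof (rule cstar_ideal_closure)
    show "0 \<in> ?S" using cstar_ideal_zero[OF I] cstar_ideal_zero[OF J] by force
    show "u + v \<in> ?S" if uv: "u \<in> ?S" "v \<in> ?S" for u v
    proof -
      obtain a b c d where "a \<in> I" "b \<in> J" "c \<in> I" "d \<in> J" "u = a + b" "v = c + d"
        using uv by blast
      thus ?thesis using I J
        by (intro CollectI exI[of _ "a + c"] exI[of _ "b + d"]) (simp add: cstar_ideal_add algebra_simps)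
    qed
    show "scaleC c u \<in> ?S" if u: "u \<in> ?S" for c u
    proof -
      obtain a b where "a \<in> I" "b \<in> J" "u = a + b" using u by blast
      thus ?thesis using I J
        by (intro CollectI exI[of _ "scaleC c a"] exI[of _ "scaleC c b"])
          (simp add: cstar_ideal_scaleC scaleC_add_right)
    qed
    show "e * u \<in> ?S \<and> u * e \<in> ?S" if u: "u \<in> ?S" for e u
    proof -
      obtain a b where "a \<in> I" "b \<in> J" "u = a + b" using u by blast
      have "e * u = e * a + e * b" "u * e = a * e + b * e" by (simp_all add: \<open>u = a + b\<close> algebra_simps)
      thus ?thesis using I J \<open>a \<in> I\<close> \<open>b \<in> J\<close>
        by (auto intro: cstar_ideal_mult_left cstar_ideal_mult_right)
    qed
  qed
  ultimately show ?thesis by simp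
qed

lemma ideal_plus_upper:
  fixes I J :: "'a :: cstar_algebra set"
  assumes I: "cstar_ideal I" and J: "cstar_ideal J"
  shows "I \<subseteq> {x + y | x y. x \<in> I \<and> y \<in> J}" "J \<subseteq> {x + y | x y. x \<in> I \<and> y \<in> J}"
proof
  show "x \<in> {x + y | x y. x \<in> I \<and> y \<in> J}" if "x \<in> I" for x
    using that cstar_ideal_zero[OF J] by (intro CollectI exI[of _ x] exI[of _ 0]) simp
next
  show "J \<subseteq> {x + y | x y. x \<in> I \<and> y \<in> J}"
  proof
    show "y \<in> {x + y | x y. x \<in> I \<and> y \<in> J}" if "y \<in> J" for y
      using that cstar_ideal_zero[OF I] by (intro CollectI exI[of _ 0] exI[of _ y]) simp
  qed
qed

theorem corollary1p4:
  fixes P :: "'a::cstar_algebra set \<Rightarrow> bool"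
  assumes zero: "P {0}"
    and sum: "\<And>I J. cstar_ideal I \<Longrightarrow> cstar_ideal J \<Longrightarrow> P I \<Longrightarrow> P J \<Longrightarrow>
               P {x + y | x y. x \<in> I \<and> y \<in> J}"
    and dir_union: "\<And>(L :: 'a set set) le F.
               directed_set L le \<Longrightarrow>
               (\<forall>l\<in>L. cstar_ideal (F l) \<and> P (F l)) \<Longrightarrow>
               (\<forall>l\<in>L. \<forall>m\<in>L. le l m \<longrightarrow> F l \<subseteq> F m) \<Longrightarrow>
               P (closure (\<Union>l\<in>L. F l))"
  shows "\<exists>I. cstar_ideal I \<and> P I \<and> (\<forall>J. cstar_ideal J \<and> P J \<longrightarrow> J \<subseteq> I)"
proof -
  define C where "C = {K :: 'a set. cstar_ideal K \<and> P K}"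
  have "{0} \<in> C" using zero cstar_ideal_singleton_zero by (simp add: C_def)
  have directed: "\<exists>K\<in>C. I \<subseteq> K \<and> J \<subseteq> K" if "I \<in> C" "J \<in> C" for I J
  proof (intro bexI conjI)
    show "{x + y | x y. x \<in> I \<and> y \<in> J} \<in> C"
      using that by (simp add: C_def sum cstar_ideal_plus)
    show "I \<subseteq> {x + y | x y. x \<in> I \<and> y \<in> J}" "J \<subseteq> {x + y | x y. x \<in> I \<and> y \<in> J}"
      using that by (simp_all add: C_def ideal_plus_upper)
  qed
  have "directed_set C (\<subseteq>)" using \<open>{0} \<in> C\<close> directed unfolding directed_set_def by blast
  from dir_union[OF this, of "\<lambda>K. K"] have "P (closure (\<Union>C))" by (simp add: C_def)
  moreover have "cstar_ideal (closure (\<Union>C))"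
    using \<open>{0} \<in> C\<close> directed by (intro cstar_ideal_closure_Union) (auto simp: C_def)
  moreover have "J \<subseteq> closure (\<Union>C)" if "cstar_ideal J" "P J" for J
    using that by (intro subset_trans[OF Union_upper closure_subset]) (simp add: C_def)
  ultimately show ?thesis by blast
qed

end
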